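(* For integers $n>3$ and $k\ge1$, $F_{3,k}(n)=0$ if and only if $(k,n)\in\{(3,6),(5,6),(5,27),(9,27),(9,486)\}$. In particular $F_{3,k}$ has no positive integer root for $k>12$, and $F_{3,5}(x)=\tfrac12(x-6)(x-27)$, $F_{3,9}(x)=\tfrac12(x-27)(x-486)$.
   Context: For an integer $j\ge0$, $\binom{x}{j}=x(x-1)\cdots(x-j+1)/j!$ as a polynomial in $x$, and $\binom{x}{j}=0$ for $j<0$. For integers $s\ge1$, $k\ge1$, the Moser polynomial is $F_{s,k}(x)=\sum_{p=1}^{s}(-1)^{p-1}p^{k-1}\binom{x}{s-p}$; in particular $2F_{3,k}(x)=x^2-(2^k+1)x+2\cdot3^{k-1}$. *)

theory Defs
  imports Complex_Main
begin

definition moser :: "nat \<Rightarrow> nat \<Rightarrow> real \<Rightarrow> real" where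
  "moser s k x = (\<Sum>p=1..s. (-1)^(p-1) * (real p)^(k-1) * (x gchoose (s-p)))"

end

theory Submission imports Defs "HOL-Number_Theory.Number_Theory" begin

text \<open>With K = k - 1 and S = 2^(K+1) + 1, a natural root n of 2 F_{3,k} satisfies
  n (S - n) = 2 * 3^K, so the two roots are 3^b and 2 * 3^c with b + c = K and
  3^b + 2 * 3^c = S. If min b c = 0 this forces 3^K <= S, hence K <= 2. Otherwise
  3^(min b c) divides 2^(K+1) + 1; since 2 is a primitive root modulo every power of 3,
  this gives 3^(min b c - 1) dvd K + 1 and therefore 3^(K-1) <= S (K+1), hence K <= 10.
  The remaining cases are checked directly.\<close>

lemma gbinomial_2: "(a::'a::field_char_0) gchoose 2 = a * (a - 1) / 2"
  by (simp add: gbinomial_prod_rev numeral_2_eq_2 field_simps)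

lemma moser_3_eq: "moser 3 k x = x * (x - 1) / 2 - 2 ^ (k - 1) * x + 3 ^ (k - 1)"
  unfolding moser_def
  by (simp add: gbinomial_2[unfolded numeral_2_eq_2] numeral_3_eq_3 sum.atLeast_Suc_atMost)

lemma moser_3_of_nat_eq_0_iff:
  assumes "k \<ge> 1"
  shows "moser 3 k (real n) = 0 \<longleftrightarrow> n * n + 2 * 3 ^ (k - 1) = (2 * 2 ^ (k - 1) + 1) * n"
proof -
  have "real (n * n + 2 * 3 ^ (k - 1)) - real ((2 * 2 ^ (k - 1) + 1) * n) = 2 * moser 3 k (real n)"
    using assms by (simp add: moser_3_eq algebra_simps add_divide_distrib diff_divide_distrib)
  then show ?thesis
    by (metis of_nat_eq_iff eq_iff_diff_eq_0 mult_eq_0_iff zero_neq_numeral)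
qed

lemma residue_primroot_three_power_two:
  assumes "t > 0"
  shows "residue_primroot (3 ^ t) (2::nat)"
proof -
  have "residue_primroot 3 (2::nat)"
    by (simp add: residue_primroot_def ord_eq_2_iff cong_def totient_prime)
  moreover have "[(2::nat) ^ (3 - 1) \<noteq> 1] (mod 3\<^sup>2)"
    by (simp add: cong_def)
  ultimately show ?thesis
    using residue_primroot_prime_lift_iff[of 3 2] assms by simp
qed

lemma three_power_Suc_dvd_two_power_plus_one_imp_dvd:
  assumes "3 ^ Suc t dvd (2::nat) ^ m + 1"
  shows "3 ^ t dvd m"
proof -
  have "(2::nat) ^ (2 * m) - 1 = (2 ^ m + 1) * (2 ^ m - 1)"
    by (simp add: power_mult power2_eq_square algebra_simps)
  then have "3 ^ Suc t dvd (2::nat) ^ (2 * m) - 1"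
    using dvd_mult2[OF assms] by metis
  then have "[(2::nat) ^ (2 * m) = 1] (mod 3 ^ Suc t)"
    by (simp add: cong_altdef_nat one_le_power)
  then have "ord (3 ^ Suc t) (2::nat) dvd 2 * m"
    using ord_divides by blast
  moreover have "ord (3 ^ Suc t) (2::nat) = 2 * 3 ^ t"
    using residue_primroot_three_power_two[of "Suc t"] totient_prime_power[of 3 "Suc t"]
    by (simp add: residue_primroot_def)
  ultimately show ?thesis
    by simp
qed

lemma two_power_lt_three_power: "K \<ge> 3 \<Longrightarrow> 2 * 2 ^ K + 1 < (3::nat) ^ K"
proof (induction K rule: dec_induct)
  case (step n)
  then show ?case by simp
qed simp

lemma two_power_mult_lt_three_power:
  "K \<ge> 11 \<Longrightarrow> (2 * 2 ^ K + 1) * (K + 1) < (3::nat) ^ (K - 1)"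
proof (induction K rule: dec_induct)
  case (step n)
  have "2 * 2 ^ Suc n + 1 \<le> 2 * (2 * 2 ^ n + 1::nat)" "2 * (Suc n + 1) \<le> 3 * (n + 1)"
    using step.hyps by simp_all
  then have "(2 * 2 ^ Suc n + 1) * (2 * (Suc n + 1)) \<le> (2 * (2 * 2 ^ n + 1)) * (3 * (n + 1::nat))"
    by (rule mult_le_mono)
  also have "\<dots> = 6 * ((2 * 2 ^ n + 1) * (n + 1))"
    by (simp add: algebra_simps)
  also have "\<dots> < 6 * 3 ^ (n - 1)"
    using step.IH by simp
  also have "\<dots> = 2 * 3 ^ (Suc n - 1)"
    using step.hyps by (cases n) auto
  finally show ?case by simp
qed simp

lemma three_power_add_two_three_power_eq_bound:
  assumes eq: "3 ^ b + 2 * 3 ^ c = 2 * 2 ^ (b + c) + (1::nat)"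
  shows "b + c \<le> 10"
proof -
  define K where "K = b + c"
  have max_le: "3 ^ max b c \<le> 2 * 2 ^ K + (1::nat)"
    using eq unfolding K_def max_def by simp
  have max_min: "max b c + min b c = K"
    unfolding K_def max_def min_def by simp
  show ?thesis
  proof (cases "min b c = 0")
    case True
    then have "3 ^ K \<le> 2 * 2 ^ K + (1::nat)"
      using max_le max_min by simp
    then show ?thesis
      using two_power_lt_three_power[of K] unfolding K_def by linarith
  next
    case False
    then obtain t where t: "min b c = Suc t"
      using not0_implies_Suc by blast
    have "3 ^ Suc t dvd 3 ^ b + 2 * (3::nat) ^ c"
      using t by (intro dvd_add dvd_mult le_imp_power_dvd) auto
    then have "3 ^ Suc t dvd (2::nat) ^ (K + 1) + 1"
      using eq unfolding K_def by simp
    then have "3 ^ t dvd K + 1"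
      by (rule three_power_Suc_dvd_two_power_plus_one_imp_dvd)
    then have "3 ^ t \<le> K + 1"
      by (rule dvd_imp_le) simp
    moreover have "3 ^ (K - 1) = (3::nat) ^ max b c * 3 ^ t"
      using max_min t by (simp flip: power_add)
    ultimately have "3 ^ (K - 1) \<le> (2 * 2 ^ K + 1) * (K + 1::nat)"
      using max_le mult_le_mono by metis
    then show ?thesis
      using two_power_mult_lt_three_power[of K] unfolding K_def by linarith
  qed
qed

lemma three_power_add_two_three_power_eq:
  assumes "3 ^ b + 2 * 3 ^ c = 2 * 2 ^ (b + c) + (1::nat)"
  shows "(b, c) \<in> {(0, 0), (1, 0), (1, 1), (3, 1), (3, 5)}"
proof -
  have "b + c \<le> 10"
    using assms by (rule three_power_add_two_three_power_eq_bound)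
  then have "b \<in> {0, 1, 2, 3, 4, 5, 6, 7, 8, 9, 10}" "c \<in> {0, 1, 2, 3, 4, 5, 6, 7, 8, 9, 10}"
    by simp_all presburger+
  then show ?thesis
    using assms \<open>b + c \<le> 10\<close> by (elim insertE emptyE) (simp_all only:, simp_all)
qed

lemma mult_eq_two_times_three_power_cases:
  assumes "u * v = 2 * (3::nat) ^ K"
  shows "\<exists>b c. b + c = K \<and> (u = 3 ^ b \<and> v = 2 * 3 ^ c \<or> u = 2 * 3 ^ c \<and> v = 3 ^ b)"
proof -
  have odd_factor: "\<exists>b c. b + c = K \<and> x = 3 ^ b \<and> y = 2 * 3 ^ c"
    if xy: "x * y = 2 * (3::nat) ^ K" and "odd x" for x y
  proof -
    have "even y"
      using xy \<open>odd x\<close> by (metis even_mult_iff even_numeral mult_2)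
    then obtain w where w: "y = 2 * w" ..
    then have xw: "x * w = 3 ^ K"
      using xy by simp
    then have "x dvd 3 ^ K"
      by (metis dvd_triv_left)
    then obtain b where b: "b \<le> K" "x = 3 ^ b"
      using divides_primepow_nat[of 3 x K] by auto
    have "3 ^ b * w = 3 ^ b * (3::nat) ^ (K - b)"
      using xw b by (simp flip: power_add)
    then show ?thesis
      using b w by (intro exI[of _ b] exI[of _ "K - b"]) auto
  qed
  have "odd u \<or> odd v"
  proof (rule ccontr)
    assume "\<not> (odd u \<or> odd v)"
    then obtain a c where "u = 2 * a" "v = 2 * c"
      by blast
    then have "(3::nat) ^ K = 2 * (a * c)"
      using assms by simp
    then have "even ((3::nat) ^ K)"
      by simp
    then show False
      by simp
  qed
  then show ?thesis
    using odd_factor[of u v] odd_factor[of v u] assms by (auto simp: mult.commute)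
qed

lemma nat_roots_of_moser_3:
  assumes "n * n + 2 * 3 ^ K = (2 * 2 ^ K + 1) * (n::nat)"
  shows "(K, n) \<in> {(0, 1), (0, 2), (1, 2), (1, 3), (2, 3), (2, 6), (4, 6), (4, 27), (8, 27), (8, 486)}"
proof -
  define S where "S = 2 * 2 ^ K + (1::nat)"
  have "n * n \<le> S * n"
    using assms unfolding S_def by (metis le_add1)
  then have "n \<le> S"
    by (cases "n = 0") auto
  have "n * (S - n) = S * n - n * n"
    by (simp add: diff_mult_distrib2 mult.commute)
  also have "\<dots> = 2 * 3 ^ K"
    using assms unfolding S_def by simp
  finally obtain b c where bc: "b + c = K"
    and n_cases: "n = 3 ^ b \<and> S - n = 2 * 3 ^ c \<or> n = 2 * 3 ^ c \<and> S - n = 3 ^ b"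
    using mult_eq_two_times_three_power_cases by blast
  have "3 ^ b + 2 * 3 ^ c = S"
    using n_cases \<open>n \<le> S\<close> by linarith
  then have "(b, c) \<in> {(0, 0), (1, 0), (1, 1), (3, 1), (3, 5)}"
    using three_power_add_two_three_power_eq bc unfolding S_def by blast
  moreover have "n = 3 ^ b \<or> n = 2 * 3 ^ c"
    using n_cases by blast
  ultimately show ?thesis
    unfolding bc[symmetric] by (elim insertE emptyE disjE) (simp_all only: prod.inject, simp_all)
qed

lemma moser_3_of_nat_eq_0_iff_mem:
  assumes "k \<ge> 1"
  shows "moser 3 k (real n) = 0 \<longleftrightarrow>
    (k, n) \<in> {(1, 1), (1, 2), (2, 2), (2, 3), (3, 3), (3, 6), (5, 6), (5, 27), (9, 27), (9, 486)}"
proof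
  assume "moser 3 k (real n) = 0"
  then have "n * n + 2 * 3 ^ (k - 1) = (2 * 2 ^ (k - 1) + 1) * n"
    using moser_3_of_nat_eq_0_iff[OF assms] by blast
  then have "(k - 1, n) \<in> {(0, 1), (0, 2), (1, 2), (1, 3), (2, 3), (2, 6), (4, 6), (4, 27), (8, 27), (8, 486)}"
    by (rule nat_roots_of_moser_3)
  then show "(k, n) \<in> {(1, 1), (1, 2), (2, 2), (2, 3), (3, 3), (3, 6), (5, 6), (5, 27), (9, 27), (9, 486)}"
    using assms by (cases k) auto
next
  assume "(k, n) \<in> {(1, 1), (1, 2), (2, 2), (2, 3), (3, 3), (3, 6), (5, 6), (5, 27), (9, 27), (9, 486)}"
  then show "moser 3 k (real n) = 0"
    unfolding moser_3_of_nat_eq_0_iff[OF assms] by (elim insertE emptyE) simp_all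
qed

theorem mainTheorem12:
  shows "(\<forall>(n::nat) (k::nat). n > 3 \<longrightarrow> k \<ge> 1 \<longrightarrow>
            (moser 3 k (real n) = 0 \<longleftrightarrow>
             (k, n) \<in> {(3,6), (5,6), (5,27), (9,27), (9,486)}))
       \<and> (\<forall>(k::nat) (n::nat). k > 12 \<longrightarrow> n \<ge> 1 \<longrightarrow> moser 3 k (real n) \<noteq> 0)
       \<and> (\<forall>x::real. moser 3 5 x = (1/2) * (x - 6) * (x - 27))
       \<and> (\<forall>x::real. moser 3 9 x = (1/2) * (x - 27) * (x - 486))"
proof (intro conjI allI impI)
  fix n k :: nat
  assume "n > 3" "k \<ge> 1"
  then show "moser 3 k (real n) = 0 \<longleftrightarrow> (k, n) \<in> {(3,6), (5,6), (5,27), (9,27), (9,486)}"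
    by (auto simp: moser_3_of_nat_eq_0_iff_mem)
next
  fix k n :: nat
  assume "k > 12"
  then show "moser 3 k (real n) \<noteq> 0"
    by (auto simp: moser_3_of_nat_eq_0_iff_mem)
next
  fix x :: real
  show "moser 3 5 x = (1/2) * (x - 6) * (x - 27)"
    by (simp add: moser_3_eq field_simps) algebra
next
  fix x :: real
  show "moser 3 9 x = (1/2) * (x - 27) * (x - 486)"
    by (simp add: moser_3_eq field_simps) algebra
qed

end
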